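(* Let $T,S\in\mathcal{B}_A(\mathcal{H})$. Then $$\omega_A(T+S)\le\frac12\left[\omega_A(T)+\omega_A(S)+\sqrt{\big(\omega_A(T)-\omega_A(S)\big)^2+4\sup_{\theta\in\mathbb{R}}\big\|\Re_A(e^{i\theta}T)\,\Re_A(e^{i\theta}S)\big\|_A}\right]\le\omega_A(T)+\omega_A(S).$$
   Context: $\mathcal{H}$ is a complex Hilbert space with inner product $\langle\cdot,\cdot\rangle$, and $A$ is a fixed nonzero positive bounded operator on $\mathcal{H}$. Set $\langle x,y\rangle_A=\langle Ax,y\rangle$ and $\|x\|_A=\|A^{1/2}x\|$. $\mathcal{B}_A(\mathcal{H})$ is the set of bounded operators $T$ for which there exists a bounded $S$ with $\langle Tx,y\rangle_A=\langle x,Sy\rangle_A$ for all $x,y$ (equivalently $\mathcal{R}(T^*A)\subseteq\mathcal{R}(A)$). For $T\in\mathcal{B}_A(\mathcal{H})$, $T^{\sharp_A}=A^\dagger T^*A$ ($A^\dagger$ the Moore–Penrose inverse) is the reduced solution of $AX=T^*A$, and $\Re_A(T)=\frac{T+T^{\sharp_A}}{2}$. For an operator $T$ with $\|Tx\|_A\le\lambda\|x\|_A$ for some $\lambda>0$ and all $x$, $\|T\|_A=\sup\{\|Tx\|_A: \|x\|_A=1\}$, and $\omega_A(T)=\sup\{|\langle Tx,x\rangle_A|:\|x\|_A=1\}$. *)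

theory Defs
  imports "HOL-Analysis.Analysis"
begin

class cvector = real_vector +
  fixes cscale :: "complex \<Rightarrow> 'a \<Rightarrow> 'a"
  assumes cscale_add_right: "cscale a (x + y) = cscale a x + cscale a y"
    and cscale_add_left: "cscale (a + b) x = cscale a x + cscale b x"
    and cscale_cscale: "cscale a (cscale b x) = cscale (a * b) x"
    and cscale_one: "cscale 1 x = x"
    and scaleR_cscale: "scaleR r x = cscale (complex_of_real r) x"

class cinner_space = cvector + real_normed_vector +
  fixes cinner :: "'a \<Rightarrow> 'a \<Rightarrow> complex"
  assumes cinner_add_left: "cinner (x + y) z = cinner x z + cinner y z"
    and cinner_cscale_left: "cinner (cscale c x) y = c * cinner x y"
    and cinner_commute: "cinner y x = cnj (cinner x y)"
    and cinner_self_ge_zero: "0 \<le> Re (cinner x x)"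
    and cinner_self_eq_zero: "cinner x x = 0 \<longleftrightarrow> x = 0"
    and norm_eq_sqrt_cinner: "norm x = sqrt (Re (cinner x x))"

class chilbert = cinner_space + complete_space

definition clinear :: "('a::cvector \<Rightarrow> 'b::cvector) \<Rightarrow> bool" where
  "clinear T \<longleftrightarrow> (\<forall>x y. T (x + y) = T x + T y) \<and> (\<forall>c x. T (cscale c x) = cscale c (T x))"

definition bounded_op :: "('a::cinner_space \<Rightarrow> 'a) \<Rightarrow> bool" where
  "bounded_op T \<longleftrightarrow> clinear T \<and> (\<exists>K. \<forall>x. norm (T x) \<le> K * norm x)"

definition positive_op :: "('a::cinner_space \<Rightarrow> 'a) \<Rightarrow> bool" where
  "positive_op A \<longleftrightarrow> bounded_op A \<and>
     (\<forall>x. Im (cinner (A x) x) = 0 \<and> 0 \<le> Re (cinner (A x) x))"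

definition adj :: "('a::cinner_space \<Rightarrow> 'a) \<Rightarrow> ('a \<Rightarrow> 'a)" where
  "adj T = (THE S. \<forall>x y. cinner (T x) y = cinner x (S y))"

definition innerA :: "('a::cinner_space \<Rightarrow> 'a) \<Rightarrow> 'a \<Rightarrow> 'a \<Rightarrow> complex" where
  "innerA A x y = cinner (A x) y"

definition normA :: "('a::cinner_space \<Rightarrow> 'a) \<Rightarrow> 'a \<Rightarrow> real" where
  "normA A x = sqrt (Re (cinner (A x) x))"

definition inBA :: "('a::cinner_space \<Rightarrow> 'a) \<Rightarrow> ('a \<Rightarrow> 'a) \<Rightarrow> bool" where
  "inBA A T \<longleftrightarrow> bounded_op T \<and>
     (\<exists>S. bounded_op S \<and> (\<forall>x y. innerA A (T x) y = innerA A x (S y)))"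

text \<open>\<open>T\<^sup>\<sharp>\<^sup>A = A\<^sup>\<dagger> T\<^sup>* A\<close>, the reduced solution of \<open>AX = T\<^sup>*A\<close>: for each x,
  the unique z in \<open>N(A)\<^sup>\<bottom>\<close> with \<open>Az = T\<^sup>*(Ax)\<close> (this is exactly what the
  Moore--Penrose inverse does on \<open>R(A)\<close>).\<close>
definition sharpA :: "('a::cinner_space \<Rightarrow> 'a) \<Rightarrow> ('a \<Rightarrow> 'a) \<Rightarrow> ('a \<Rightarrow> 'a)" where
  "sharpA A T = (\<lambda>x. THE z. A z = adj T (A x) \<and> (\<forall>w. A w = 0 \<longrightarrow> cinner z w = 0))"

definition ReA :: "('a::cinner_space \<Rightarrow> 'a) \<Rightarrow> ('a \<Rightarrow> 'a) \<Rightarrow> ('a \<Rightarrow> 'a)" where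
  "ReA A T = (\<lambda>x. cscale (1/2) (T x + sharpA A T x))"

definition opnormA :: "('a::cinner_space \<Rightarrow> 'a) \<Rightarrow> ('a \<Rightarrow> 'a) \<Rightarrow> real" where
  "opnormA A T = Sup {normA A (T x) | x. normA A x = 1}"

definition omegaA :: "('a::cinner_space \<Rightarrow> 'a) \<Rightarrow> ('a \<Rightarrow> 'a) \<Rightarrow> real" where
  "omegaA A T = Sup {cmod (innerA A (T x) x) | x. normA A x = 1}"

end

(*
  Let a = omega_A(T), b = omega_A(S) and, for real theta, X = Re_A(e^(i theta) T) and
  Y = Re_A(e^(i theta) S). Then X and Y are A-selfadjoint with numerical radii at most a and b,
  and the choice theta = - arg <(T + S) x, x>_A turns |<(T + S) x, x>_A| into Re <(X + Y) x, x>_A.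
  It therefore suffices to bound the numerical radius mu of Z = X + Y by the larger root of
  (t - a)(t - b) = m, where ||X Y||_A <= m. As Z is selfadjoint, ||Z||_A = mu; at a unit vector x
  where |<Z x, x>_A| is nearly mu, Z x is (up to sign) nearly mu x, and the identity
  (mu - X)(mu - Y) x = X Y x - mu (Z x - mu x), together with ||(mu - X) v||_A >= (mu - a) ||v||_A,
  gives (mu - a)(mu - b) <= m in the limit. The second inequality is just m <= a b.

  All of this takes place in the semi-inner product <A x, y>. The Hilbert space is needed only to
  make T^#A well defined (projection theorem, Riesz representation) and to show that operators in
  B_A(H) are bounded for ||.||_A: if S is an A-adjoint of T, then S T is A-selfadjoint and
  norm-bounded, and log-convexity of k -> ||(S T)^k x||_A carries the norm bound over to ||.||_A.
*)

theory Submission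
  imports Defs
begin

lemma cscale_zero_left [simp]: "cscale 0 x = (0::'a::cvector)"
  using scaleR_cscale[of 0 x] by simp

lemma cscale_zero_right [simp]: "cscale c 0 = (0::'a::cvector)"
  using cscale_add_right[of c "0::'a" 0] by simp

lemma cscale_minus_right: "cscale c (- x) = - cscale c (x::'a::cvector)"
  using cscale_add_right[of c x "- x"] by (simp add: minus_unique)

lemma cscale_of_real: "cscale (complex_of_real r) x = scaleR r (x::'a::cvector)"
  by (simp add: scaleR_cscale)

lemma clinear_add: "clinear f \<Longrightarrow> f (x + y) = f x + f y"
  by (simp add: clinear_def)

lemma clinear_cscale: "clinear f \<Longrightarrow> f (cscale c x) = cscale c (f x)"
  by (simp add: clinear_def)

lemma clinear_scaleR: "clinear f \<Longrightarrow> f (scaleR r x) = scaleR r (f x)"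
  by (simp add: clinear_def scaleR_cscale)

lemma clinear_diff: "clinear f \<Longrightarrow> f (x - y) = f x - f y"
  using clinear_add[of f "x - y" y] by (simp add: eq_diff_eq)

lemma clinear_0: "clinear f \<Longrightarrow> f 0 = 0"
  using clinear_diff[of f 0 0] by simp

lemma clinear_neg: "clinear f \<Longrightarrow> f (- x) = - f x"
  using clinear_diff[of f 0 x] clinear_0[of f] by simp

lemma clinear_compose_add: "clinear f \<Longrightarrow> clinear g \<Longrightarrow> clinear (\<lambda>x. f x + g x)"
  by (simp add: clinear_def cscale_add_right algebra_simps)

lemma clinear_compose_neg: "clinear f \<Longrightarrow> clinear (\<lambda>x. - f x)"
  by (simp add: clinear_def cscale_minus_right)

lemma clinear_compose: "clinear f \<Longrightarrow> clinear g \<Longrightarrow> clinear (f \<circ> g)"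
  by (simp add: clinear_def)

lemma clinear_compose_cscale: "clinear f \<Longrightarrow> clinear (\<lambda>x. cscale c (f x))"
  by (simp add: clinear_def cscale_add_right cscale_cscale mult.commute)

definition upper_root :: "real \<Rightarrow> real \<Rightarrow> real \<Rightarrow> real" where
  "upper_root a b m = 1/2 * (a + b + sqrt ((a - b)\<^sup>2 + 4 * m))"

lemma upper_root_ge:
  assumes "0 \<le> m"
  shows "a \<le> upper_root a b m" "b \<le> upper_root a b m"
proof -
  have "sqrt ((a - b)\<^sup>2) \<le> sqrt ((a - b)\<^sup>2 + 4 * m)"
    using assms by (intro real_sqrt_le_mono) simp
  then show "a \<le> upper_root a b m" "b \<le> upper_root a b m"
    by (auto simp: upper_root_def)
qed

lemma upper_root_eq:
  assumes "0 \<le> m"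
  shows "(upper_root a b m - a) * (upper_root a b m - b) = m"
proof -
  define s where "s = sqrt ((a - b)\<^sup>2 + 4 * m)"
  have "s\<^sup>2 = (a - b)\<^sup>2 + 4 * m" using assms by (simp add: s_def)
  moreover have "(upper_root a b m - a) * (upper_root a b m - b) = (s\<^sup>2 - (a - b)\<^sup>2) / 4"
    unfolding upper_root_def s_def[symmetric] by (simp add: field_simps power2_eq_square)
  ultimately show ?thesis by simp
qed

lemma upper_root_le_add:
  assumes "0 \<le> a" "0 \<le> b" "m \<le> a * b"
  shows "upper_root a b m \<le> a + b"
proof -
  have "sqrt ((a - b)\<^sup>2 + 4 * m) \<le> sqrt ((a + b)\<^sup>2)"
    using assms by (intro real_sqrt_le_mono) (simp add: power2_eq_square algebra_simps)
  then show ?thesis using assms by (simp add: upper_root_def)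
qed

lemma small_sqrt_term:
  fixes \<mu> g :: real
  assumes \<mu>: "0 \<le> \<mu>" and g: "0 < g"
  obtains d where "0 < d" "\<mu> * sqrt (2 * \<mu> * d) < g"
proof
  define d where "d = (g / (\<mu> + 1))\<^sup>2 / (2 * \<mu> + 1)"
  show "0 < d" using g \<mu> by (simp add: d_def)
  have "2 * \<mu> * d = (2 * \<mu> / (2 * \<mu> + 1)) * (g / (\<mu> + 1))\<^sup>2"
    by (simp add: d_def)
  also have "\<dots> \<le> (g / (\<mu> + 1))\<^sup>2"
    using \<mu> by (intro mult_left_le_one_le) auto
  finally have "sqrt (2 * \<mu> * d) \<le> sqrt ((g / (\<mu> + 1))\<^sup>2)" by (rule real_sqrt_le_mono)
  also have "\<dots> = g / (\<mu> + 1)" using g \<mu> by simp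
  finally have "\<mu> * sqrt (2 * \<mu> * d) \<le> \<mu> * (g / (\<mu> + 1))"
    using \<mu> by (rule mult_left_mono)
  also have "\<dots> < g" using g \<mu> by (simp add: field_simps)
  finally show "\<mu> * sqrt (2 * \<mu> * d) < g" .
qed

lemma power_le_const_mult_power_imp_le:
  fixes r L C :: real
  assumes r: "0 \<le> r" and L: "0 \<le> L" and C: "0 < C" and h: "\<And>k. r ^ k \<le> C * L ^ k"
  shows "r \<le> L"
proof (rule LIMSEQ_le_const)
  show "(\<lambda>k. root k C * L) \<longlonglongrightarrow> L"
    using tendsto_mult[OF LIMSEQ_root_const[OF C] tendsto_const[of L]] by simp
  show "\<exists>N. \<forall>k\<ge>N. r \<le> root k C * L"
  proof (intro exI[of _ 1] allI impI)
    fix k :: nat assume "1 \<le> k"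
    then have k: "0 < k" by simp
    have "r = root k (r ^ k)" using real_root_power_cancel[OF k r] by simp
    also have "\<dots> \<le> root k (C * L ^ k)" by (rule real_root_le_mono[OF k h])
    also have "\<dots> = root k C * L" by (simp add: real_root_mult real_root_power_cancel[OF k L])
    finally show "r \<le> root k C * L" .
  qed
qed

lemma log_convex_ratio_le:
  fixes f :: "nat \<Rightarrow> real"
  assumes nonneg: "\<And>k. 0 \<le> f k" and log_convex: "\<And>k. (f (Suc k))\<^sup>2 \<le> f (Suc (Suc k)) * f k"
    and L: "0 \<le> L" and growth: "\<And>k. f k \<le> C * L ^ k"
  shows "f 1 \<le> L * f 0"
proof (cases "f 0 = 0")
  case True
  then have "(f 1)\<^sup>2 \<le> 0\<^sup>2" using log_convex[of 0] by simp
  then show ?thesis using True power2_le_imp_le[of "f 1" 0] by simp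
next
  case False
  then have f0: "0 < f 0" using nonneg[of 0] by linarith
  define r where "r = f 1 / f 0"
  have r: "0 \<le> r" using nonneg[of 1] f0 by (simp add: r_def)
  have ratio: "r * f k \<le> f (Suc k)" for k
  proof (induction k)
    case 0
    then show ?case using f0 by (simp add: r_def)
  next
    case (Suc k)
    show ?case
    proof (cases "f k = 0")
      case True
      then have "(f (Suc k))\<^sup>2 \<le> 0\<^sup>2" using log_convex[of k] by simp
      then have "f (Suc k) = 0" using nonneg[of "Suc k"] power2_le_imp_le[of "f (Suc k)" 0] by simp
      then show ?thesis using nonneg[of "Suc (Suc k)"] by simp
    next
      case False
      then have fk: "0 < f k" using nonneg[of k] by linarith
      have "f (Suc k) * (r * f k) \<le> f (Suc k) * f (Suc k)"
        using Suc.IH nonneg by (rule mult_left_mono)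
      also have "\<dots> \<le> f (Suc (Suc k)) * f k" using log_convex[of k] by (simp only: power2_eq_square)
      finally have "(r * f (Suc k)) * f k \<le> f (Suc (Suc k)) * f k" by (simp only: mult_ac)
      then show ?thesis using fk by (rule mult_right_le_imp_le)
    qed
  qed
  have lower: "r ^ k * f 0 \<le> f k" for k
  proof (induction k)
    case (Suc k)
    have "r ^ Suc k * f 0 = r * (r ^ k * f 0)" by simp
    also have "\<dots> \<le> r * f k" using Suc r by (rule mult_left_mono)
    also have "\<dots> \<le> f (Suc k)" by (rule ratio)
    finally show ?case .
  qed simp
  have "r ^ k \<le> (C / f 0) * L ^ k" for k
  proof -
    have "r ^ k \<le> (C * L ^ k) / f 0"
      using order_trans[OF lower growth] by (simp only: pos_le_divide_eq[OF f0])
    then show ?thesis by simp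
  qed
  moreover have "0 < C / f 0" using growth[of 0] f0 by simp
  ultimately have "r \<le> L" using power_le_const_mult_power_imp_le[OF r L] by blast
  then show ?thesis using f0 by (simp add: r_def pos_divide_le_eq)
qed

lemma cis_minus_Arg_mult: "cis (- Arg z) * z = complex_of_real (cmod z)"
proof -
  have "cis (- Arg z) * z = complex_of_real (cmod z) * (cis (- Arg z) * cis (Arg z))"
    using rcis_cmod_Arg[of z] unfolding rcis_def by (metis mult.left_commute)
  also have "cis (- Arg z) * cis (Arg z) = 1" by (simp add: cis_mult)
  finally show ?thesis by simp
qed

locale semi_inner_product =
  fixes ip :: "'a::cvector \<Rightarrow> 'a \<Rightarrow> complex"
  assumes add_left: "ip (x + y) z = ip x z + ip y z"
    and cscale_left: "ip (cscale c x) y = c * ip x y"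
    and conj_sym: "ip y x = cnj (ip x y)"
    and Re_self_nonneg: "0 \<le> Re (ip x x)"
begin

definition snorm :: "'a \<Rightarrow> real" where
  "snorm x = sqrt (Re (ip x x))"

definition hermitian :: "('a \<Rightarrow> 'a) \<Rightarrow> bool" where
  "hermitian Z \<longleftrightarrow> (\<forall>u v. ip (Z u) v = ip u (Z v))"

definition numrad :: "('a \<Rightarrow> 'a) \<Rightarrow> real" where
  "numrad Z = Sup {cmod (ip (Z x) x) | x. snorm x = 1}"

definition opnorm :: "('a \<Rightarrow> 'a) \<Rightarrow> real" where
  "opnorm Z = Sup {snorm (Z x) | x. snorm x = 1}"

lemma add_right: "ip x (y + z) = ip x y + ip x z"
  using conj_sym[of x "y + z"] conj_sym[of x y] conj_sym[of x z] add_left[of y z x] by simp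

lemma cscale_right: "ip x (cscale c y) = cnj c * ip x y"
  using conj_sym[of x "cscale c y"] conj_sym[of x y] cscale_left[of c y x] by simp

lemma zero_left [simp]: "ip 0 y = 0"
  using add_left[of 0 0 y] by simp

lemma zero_right [simp]: "ip x 0 = 0"
  using add_right[of x 0 0] by simp

lemma minus_left: "ip (- x) y = - ip x y"
  using add_left[of x "- x" y] by (simp add: minus_unique)

lemma minus_right: "ip x (- y) = - ip x y"
  using add_right[of x y "- y"] by (simp add: minus_unique)

lemma diff_left: "ip (x - y) z = ip x z - ip y z"
  using add_left[of x "- y" z] by (simp add: minus_left)

lemma diff_right: "ip x (y - z) = ip x y - ip x z"
  using add_right[of x y "- z"] by (simp add: minus_right)

lemma scaleR_left: "ip (scaleR r x) y = complex_of_real r * ip x y"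
  by (simp add: scaleR_cscale cscale_left)

lemma scaleR_right: "ip x (scaleR r y) = complex_of_real r * ip x y"
  by (simp add: scaleR_cscale cscale_right)

lemma Re_conj_sym: "Re (ip y x) = Re (ip x y)"
  using conj_sym[of x y] by simp

lemma Im_self [simp]: "Im (ip x x) = 0"
  using conj_sym[of x x] by (metis cnj.simps(2) neg_equal_zero)

lemma self_eq_of_real: "ip x x = complex_of_real (Re (ip x x))"
  by (simp add: complex_eq_iff)

lemma snorm_nonneg [simp]: "0 \<le> snorm x"
  by (simp add: snorm_def Re_self_nonneg)

lemma snorm_power2: "(snorm x)\<^sup>2 = Re (ip x x)"
  using Re_self_nonneg[of x] by (simp add: snorm_def)

lemma Re_self_diff_cscale:
  "Re (ip (x - cscale c y) (x - cscale c y)) =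
     Re (ip x x) - 2 * Re (cnj c * ip x y) + (cmod c)\<^sup>2 * Re (ip y y)"
proof -
  have "ip (x - cscale c y) (x - cscale c y) =
      ip x x - cnj c * ip x y - c * cnj (ip x y) + c * cnj c * ip y y"
    by (simp add: diff_left diff_right cscale_left cscale_right algebra_simps flip: conj_sym)
  moreover have "Re (c * cnj c * ip y y) = (cmod c)\<^sup>2 * Re (ip y y)"
    by (subst self_eq_of_real) (simp add: complex_mult_cnj cmod_power2 del: of_real_power)
  moreover have "Re (c * cnj (ip x y)) = Re (cnj c * ip x y)"
    by (metis cnj.simps(1) complex_cnj_cnj complex_cnj_mult)
  ultimately show ?thesis by simp
qed

lemma Cauchy_Schwarz_power2: "(cmod (ip x y))\<^sup>2 \<le> Re (ip x x) * Re (ip y y)"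
proof (cases "Re (ip y y) > 0")
  case True
  define Q where "Q = Re (ip y y)"
  define c where "c = ip x y / complex_of_real Q"
  have "0 \<le> Re (ip (x - cscale c y) (x - cscale c y))" by (rule Re_self_nonneg)
  also have "\<dots> = Re (ip x x) - 2 * Re (cnj c * ip x y) + (cmod c)\<^sup>2 * Q"
    by (simp add: Re_self_diff_cscale Q_def)
  also have "cnj c * ip x y = complex_of_real ((cmod (ip x y))\<^sup>2 / Q)"
    unfolding c_def of_real_divide complex_norm_square by (simp add: mult.commute)
  also have "(cmod c)\<^sup>2 = (cmod (ip x y))\<^sup>2 / Q\<^sup>2"
    using True by (simp add: c_def Q_def norm_divide power_divide)
  finally have "0 \<le> Re (ip x x) - (cmod (ip x y))\<^sup>2 / Q"
    using True by (simp add: Q_def power2_eq_square field_simps)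
  then show ?thesis using True by (simp add: Q_def field_simps)
next
  case False
  then have Q0: "Re (ip y y) = 0" using Re_self_nonneg[of y] by linarith
  show ?thesis
  proof (rule ccontr)
    assume "\<not> ?thesis"
    then have nz: "ip x y \<noteq> 0" using Q0 by auto
    \<comment> \<open>y is null, so along \<open>x - r (ip x y) y\<close> the form decreases linearly in r
      and eventually becomes negative\<close>
    define r where "r = (Re (ip x x) + 1) / (2 * (cmod (ip x y))\<^sup>2)"
    define c where "c = complex_of_real r * ip x y"
    have "0 \<le> Re (ip (x - cscale c y) (x - cscale c y))" by (rule Re_self_nonneg)
    also have "\<dots> = Re (ip x x) - 2 * Re (cnj c * ip x y)"
      by (simp add: Re_self_diff_cscale Q0)
    also have "cnj c * ip x y = complex_of_real (r * (cmod (ip x y))\<^sup>2)"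
      unfolding c_def of_real_mult complex_norm_square by (simp add: mult.commute)
    also have "2 * Re (complex_of_real (r * (cmod (ip x y))\<^sup>2)) = Re (ip x x) + 1"
      using nz by (simp add: r_def)
    finally show False by simp
  qed
qed

lemma Cauchy_Schwarz: "cmod (ip x y) \<le> snorm x * snorm y"
proof -
  have "(cmod (ip x y))\<^sup>2 \<le> (snorm x * snorm y)\<^sup>2"
    using Cauchy_Schwarz_power2[of x y] by (simp add: power_mult_distrib snorm_power2)
  then show ?thesis by (rule power2_le_imp_le) simp
qed

lemma Re_le_snorm_mult: "Re (ip x y) \<le> snorm x * snorm y"
  using Cauchy_Schwarz[of x y] complex_Re_le_cmod[of "ip x y"] by linarith

lemma snorm_cscale: "snorm (cscale c x) = cmod c * snorm x"
proof -
  have "Re (ip (cscale c x) (cscale c x)) = Re (c * cnj c * ip x x)"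
    by (simp add: cscale_left cscale_right mult.assoc)
  also have "\<dots> = (cmod c)\<^sup>2 * Re (ip x x)"
    by (subst self_eq_of_real) (simp add: complex_mult_cnj cmod_power2 del: of_real_power)
  finally show ?thesis by (simp add: snorm_def real_sqrt_mult)
qed

lemma snorm_scaleR: "snorm (scaleR r x) = \<bar>r\<bar> * snorm x"
  using snorm_cscale[of "complex_of_real r" x] by (simp add: cscale_of_real)

lemma snorm_minus: "snorm (- x) = snorm x"
  by (simp add: snorm_def minus_left minus_right)

lemma Re_self_add: "Re (ip (x + y) (x + y)) = Re (ip x x) + 2 * Re (ip x y) + Re (ip y y)"
  by (simp add: add_left add_right Re_conj_sym[of y x])

lemma Re_self_diff: "Re (ip (x - y) (x - y)) = Re (ip x x) - 2 * Re (ip x y) + Re (ip y y)"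
  by (simp add: diff_left diff_right Re_conj_sym[of y x])

lemma snorm_triangle: "snorm (x + y) \<le> snorm x + snorm y"
proof -
  have "(snorm (x + y))\<^sup>2 = (snorm x)\<^sup>2 + 2 * Re (ip x y) + (snorm y)\<^sup>2"
    by (simp add: snorm_power2 Re_self_add)
  also have "\<dots> \<le> (snorm x + snorm y)\<^sup>2"
    using Re_le_snorm_mult[of x y] by (simp add: power2_sum)
  finally show ?thesis by (rule power2_le_imp_le) simp
qed

lemma snorm_diff_le: "snorm (x - y) \<le> snorm x + snorm y"
  using snorm_triangle[of x "- y"] by (simp add: snorm_minus)

lemma parallelogram_law:
  "(snorm (x + y))\<^sup>2 + (snorm (x - y))\<^sup>2 = 2 * (snorm x)\<^sup>2 + 2 * (snorm y)\<^sup>2"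
  by (simp add: snorm_power2 Re_self_add Re_self_diff)

lemma hermitianD: "hermitian Z \<Longrightarrow> ip (Z u) v = ip u (Z v)"
  by (simp add: hermitian_def)

lemma hermitian_Im_self: "hermitian Z \<Longrightarrow> Im (ip (Z u) u) = 0"
  using conj_sym[of u "Z u"] by (metis cnj.simps(2) hermitianD neg_equal_zero)

lemma hermitian_add: "hermitian X \<Longrightarrow> hermitian Y \<Longrightarrow> hermitian (\<lambda>u. X u + Y u)"
  by (simp add: hermitian_def add_left add_right)

lemma hermitian_part:
  assumes X: "\<And>u v. ip (X u) v = (ip (Z u) v + ip u (Z v)) / 2"
  shows "hermitian X" and "ip (X v) v = complex_of_real (Re (ip (Z v) v))"
proof -
  show "hermitian X"
  proof (unfold hermitian_def, intro allI)
    fix u v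
    have "ip u (X v) = cnj (ip (X v) u)" by (rule conj_sym)
    also have "\<dots> = (cnj (ip (Z v) u) + cnj (ip v (Z u))) / 2" by (simp add: X)
    also have "cnj (ip (Z v) u) = ip u (Z v)" by (rule conj_sym[symmetric])
    also have "cnj (ip v (Z u)) = ip (Z u) v" by (rule conj_sym[symmetric])
    finally show "ip (X u) v = ip u (X v)" by (simp add: X add.commute)
  qed
  have "ip v (Z v) = cnj (ip (Z v) v)" by (rule conj_sym)
  then show "ip (X v) v = complex_of_real (Re (ip (Z v) v))"
    by (simp add: X complex_eq_iff)
qed

lemma hermitian_Re_le:
  assumes Z: "clinear Z" and sa: "hermitian Z"
    and bound: "\<And>u. cmod (ip (Z u) u) \<le> c * (snorm u)\<^sup>2"
  shows "2 * Re (ip (Z u) v) \<le> c * ((snorm u)\<^sup>2 + (snorm v)\<^sup>2)"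
proof -
  have "Re (ip (Z v) u) = Re (ip (Z u) v)"
    using hermitianD[OF sa, of v u] Re_conj_sym by simp
  then have "4 * Re (ip (Z u) v) = Re (ip (Z (u + v)) (u + v)) - Re (ip (Z (u - v)) (u - v))"
    by (simp add: clinear_add[OF Z] clinear_diff[OF Z] add_left add_right diff_left diff_right)
  also have "\<dots> \<le> c * (snorm (u + v))\<^sup>2 + c * (snorm (u - v))\<^sup>2"
    using bound[of "u + v"] bound[of "u - v"] abs_Re_le_cmod[of "ip (Z (u + v)) (u + v)"]
      abs_Re_le_cmod[of "ip (Z (u - v)) (u - v)"] by linarith
  also have "\<dots> = c * ((snorm (u + v))\<^sup>2 + (snorm (u - v))\<^sup>2)"
    by (simp add: distrib_left)
  also have "\<dots> = 2 * c * ((snorm u)\<^sup>2 + (snorm v)\<^sup>2)"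
    by (simp only: parallelogram_law) (simp add: algebra_simps)
  finally show ?thesis by simp
qed

lemma hermitian_snorm_le:
  assumes Z: "clinear Z" and sa: "hermitian Z" and c: "0 \<le> c"
    and bound: "\<And>u. cmod (ip (Z u) u) \<le> c * (snorm u)\<^sup>2"
  shows "snorm (Z u) \<le> c * snorm u"
proof -
  define N where "N = snorm (Z u)"
  define U where "U = snorm u"
  \<comment> \<open>test \<open>hermitian_Re_le\<close> against \<open>v = t Z u\<close>; \<open>t = 1 / c\<close> is optimal\<close>
  have test: "2 * (t * N\<^sup>2) \<le> c * (U\<^sup>2 + t\<^sup>2 * N\<^sup>2)" for t
  proof -
    have "Re (ip (Z u) (scaleR t (Z u))) = t * N\<^sup>2"
      by (simp add: scaleR_right N_def snorm_power2)
    moreover have "(snorm (scaleR t (Z u)))\<^sup>2 = t\<^sup>2 * N\<^sup>2"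
      by (simp add: snorm_scaleR N_def power_mult_distrib)
    ultimately show ?thesis
      using hermitian_Re_le[OF Z sa bound, of u "scaleR t (Z u)"] by (simp add: U_def)
  qed
  show ?thesis
  proof (cases "c = 0")
    case True
    then have "N\<^sup>2 \<le> 0" using test[of 1] by simp
    then show ?thesis using True by (simp add: N_def)
  next
    case False
    then have c: "0 < c" using c by simp
    have "2 * N\<^sup>2 = c * (2 * ((1 / c) * N\<^sup>2))" using c by simp
    also have "\<dots> \<le> c * (c * (U\<^sup>2 + (1 / c)\<^sup>2 * N\<^sup>2))"
      using test[of "1 / c"] c by (intro mult_left_mono) auto
    also have "\<dots> = c\<^sup>2 * U\<^sup>2 + N\<^sup>2"
      using c by (simp add: power2_eq_square distrib_left)
    finally have "2 * N\<^sup>2 \<le> c\<^sup>2 * U\<^sup>2 + N\<^sup>2" .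
    then have "N\<^sup>2 \<le> (c * U)\<^sup>2" by (simp add: power_mult_distrib)
    then have "N \<le> c * U" by (rule power2_le_imp_le) (use c in \<open>simp add: U_def\<close>)
    then show ?thesis by (simp add: N_def U_def)
  qed
qed

lemma hermitian_snorm_bound:
  assumes R: "hermitian R" and c: "0 \<le> c" and dominated: "\<And>y. snorm y \<le> c * N y"
    and L: "0 \<le> L" and bounded: "\<And>y. N (R y) \<le> L * N y"
  shows "snorm (R x) \<le> L * snorm x"
proof -
  define f where "f k = snorm ((R ^^ k) x)" for k
  have log_convex: "(f (Suc k))\<^sup>2 \<le> f (Suc (Suc k)) * f k" for k
  proof -
    define v where "v = (R ^^ k) x"
    have "(f (Suc k))\<^sup>2 = Re (ip (R v) (R v))" by (simp add: f_def v_def snorm_power2)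
    also have "ip (R v) (R v) = ip (R (R v)) v" by (rule hermitianD[OF R, symmetric])
    also have "Re (ip (R (R v)) v) \<le> snorm (R (R v)) * snorm v" by (rule Re_le_snorm_mult)
    finally show ?thesis by (simp add: f_def v_def)
  qed
  have iterate: "N ((R ^^ k) x) \<le> L ^ k * N x" for k
  proof (induction k)
    case (Suc k)
    have "N ((R ^^ Suc k) x) \<le> L * N ((R ^^ k) x)" using bounded by simp
    also have "\<dots> \<le> L * (L ^ k * N x)" using Suc L by (rule mult_left_mono)
    finally show ?case by (simp add: mult.assoc)
  qed simp
  have growth: "f k \<le> (c * N x) * L ^ k" for k
  proof -
    have "f k \<le> c * N ((R ^^ k) x)" unfolding f_def by (rule dominated)
    also have "\<dots> \<le> c * (L ^ k * N x)" using iterate c by (rule mult_left_mono)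
    finally show ?thesis by (simp add: mult_ac)
  qed
  have "f 1 \<le> L * f 0"
    by (rule log_convex_ratio_le[OF _ log_convex L growth]) (simp add: f_def)
  then show ?thesis by (simp add: f_def)
qed

lemma cmod_le_of_unit_bound:
  assumes Z: "clinear Z" and unit: "\<And>u. snorm u = 1 \<Longrightarrow> cmod (ip (Z u) u) \<le> w"
  shows "cmod (ip (Z u) u) \<le> w * (snorm u)\<^sup>2"
proof (cases "snorm u = 0")
  case True
  then show ?thesis using Cauchy_Schwarz[of "Z u" u] by simp
next
  case False
  then have pos: "0 < snorm u" using snorm_nonneg[of u] by linarith
  define u' where "u' = scaleR (1 / snorm u) u"
  have "snorm u' = 1" using pos by (simp add: u'_def snorm_scaleR)
  then have "cmod (ip (Z u') u') \<le> w" by (rule unit)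
  moreover have "ip (Z u') u' = complex_of_real ((1 / snorm u)\<^sup>2) * ip (Z u) u"
    by (simp add: u'_def clinear_scaleR[OF Z] scaleR_left scaleR_right power2_eq_square)
  ultimately have "(1 / snorm u)\<^sup>2 * cmod (ip (Z u) u) \<le> w"
    by (simp only: norm_mult norm_of_real) simp
  then show ?thesis using pos by (simp add: field_simps power2_eq_square)
qed

lemma snorm_le_of_unit_bound:
  assumes Z: "clinear Z" and unit: "\<And>u. snorm u = 1 \<Longrightarrow> snorm (Z u) \<le> w"
    and null: "\<And>u. snorm u = 0 \<Longrightarrow> snorm (Z u) = 0" and w: "0 \<le> w"
  shows "snorm (Z u) \<le> w * snorm u"
proof (cases "snorm u = 0")
  case True
  then show ?thesis using null by simp
next
  case False
  then have pos: "0 < snorm u" using snorm_nonneg[of u] by linarith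
  define u' where "u' = scaleR (1 / snorm u) u"
  have "snorm u' = 1" using pos by (simp add: u'_def snorm_scaleR)
  then have "snorm (Z u') \<le> w" by (rule unit)
  moreover have "snorm (Z u') = (1 / snorm u) * snorm (Z u)"
    using pos by (simp add: u'_def clinear_scaleR[OF Z] snorm_scaleR)
  ultimately show ?thesis using pos by (simp add: field_simps)
qed

lemma cmod_le_numrad:
  assumes "snorm u = 1" and "\<And>x. snorm x = 1 \<Longrightarrow> cmod (ip (Z x) x) \<le> K"
  shows "cmod (ip (Z u) u) \<le> numrad Z"
  unfolding numrad_def by (rule cSup_upper) (use assms in \<open>auto intro!: bdd_aboveI[where M = K]\<close>)

lemma numrad_le:
  assumes "snorm u0 = 1" and "\<And>x. snorm x = 1 \<Longrightarrow> cmod (ip (Z x) x) \<le> K"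
  shows "numrad Z \<le> K"
  unfolding numrad_def by (rule cSup_least) (use assms in auto)

lemma numrad_nonneg:
  assumes "snorm u0 = 1" and "\<And>x. snorm x = 1 \<Longrightarrow> cmod (ip (Z x) x) \<le> K"
  shows "0 \<le> numrad Z"
  using order_trans[OF norm_ge_zero cmod_le_numrad[OF assms]] .

lemma numrad_approx:
  assumes u0: "snorm u0 = 1" and bound: "\<And>x. snorm x = 1 \<Longrightarrow> cmod (ip (Z x) x) \<le> K"
    and d: "0 < d"
  obtains u where "snorm u = 1" "numrad Z - d < cmod (ip (Z u) u)"
proof -
  define R where "R = {cmod (ip (Z x) x) | x. snorm x = 1}"
  have "R \<noteq> {}" using u0 by (auto simp: R_def)
  moreover have "bdd_above R" using bound by (auto simp: R_def intro!: bdd_aboveI[where M = K])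
  moreover have "numrad Z - d < Sup R" using d by (simp add: numrad_def R_def)
  ultimately obtain r where "r \<in> R" "numrad Z - d < r" using less_cSup_iff by blast
  then show ?thesis using that by (auto simp: R_def)
qed

lemma hermitian_snorm_le_numrad:
  assumes Z: "clinear Z" "hermitian Z" and u0: "snorm u0 = 1"
    and bound: "\<And>x. snorm x = 1 \<Longrightarrow> cmod (ip (Z x) x) \<le> K"
  shows "snorm (Z v) \<le> numrad Z * snorm v"
  by (rule hermitian_snorm_le[OF Z numrad_nonneg[OF u0 bound]
        cmod_le_of_unit_bound[OF Z(1) cmod_le_numrad[OF _ bound]]])

lemma snorm_le_opnorm:
  assumes "snorm u = 1" and "\<And>x. snorm x = 1 \<Longrightarrow> snorm (Z x) \<le> K"
  shows "snorm (Z u) \<le> opnorm Z"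
  unfolding opnorm_def by (rule cSup_upper) (use assms in \<open>auto intro!: bdd_aboveI[where M = K]\<close>)

lemma opnorm_le:
  assumes "snorm u0 = 1" and "\<And>x. snorm x = 1 \<Longrightarrow> snorm (Z x) \<le> K"
  shows "opnorm Z \<le> K"
  unfolding opnorm_def by (rule cSup_least) (use assms in auto)

lemma snorm_le_opnorm_mult:
  assumes Z: "clinear Z" and u0: "snorm u0 = 1" and K: "\<And>x. snorm (Z x) \<le> K * snorm x"
  shows "snorm (Z v) \<le> opnorm Z * snorm v"
proof (rule snorm_le_of_unit_bound[OF Z])
  have unit: "snorm (Z x) \<le> K" if "snorm x = 1" for x using K[of x] that by simp
  show "snorm (Z u) \<le> opnorm Z" if "snorm u = 1" for u by (rule snorm_le_opnorm[OF that unit])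
  show "snorm (Z u) = 0" if "snorm u = 0" for u
    using K[of u] that snorm_nonneg[of "Z u"] by simp
  show "0 \<le> opnorm Z"
    using order_trans[OF snorm_nonneg snorm_le_opnorm[OF u0 unit]] .
qed

lemma snorm_shift_lower_bound:
  assumes bound: "\<And>v. cmod (ip (X v) v) \<le> a * (snorm v)\<^sup>2" and a: "a \<le> \<mu>"
  shows "(\<mu> - a) * snorm v \<le> snorm (scaleR \<mu> v - X v)"
proof (cases "snorm v = 0")
  case True
  then show ?thesis by simp
next
  case False
  then have pos: "0 < snorm v" using snorm_nonneg[of v] by linarith
  have "Re (ip (X v) v) \<le> a * (snorm v)\<^sup>2"
    using bound[of v] complex_Re_le_cmod[of "ip (X v) v"] by linarith
  then have "(\<mu> - a) * (snorm v)\<^sup>2 \<le> Re (ip (scaleR \<mu> v - X v) v)"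
    by (simp add: diff_left scaleR_left snorm_power2 algebra_simps)
  also have "\<dots> \<le> snorm (scaleR \<mu> v - X v) * snorm v" by (rule Re_le_snorm_mult)
  finally have "((\<mu> - a) * snorm v) * snorm v \<le> snorm (scaleR \<mu> v - X v) * snorm v"
    by (simp add: power2_eq_square mult.assoc)
  then show ?thesis using pos by simp
qed

lemma shifted_product_bound:
  assumes X: "clinear X" and Y: "clinear Y"
    and bX: "\<And>v. cmod (ip (X v) v) \<le> a * (snorm v)\<^sup>2"
    and bY: "\<And>v. cmod (ip (Y v) v) \<le> b * (snorm v)\<^sup>2"
    and a: "a \<le> \<mu>" and b: "b \<le> \<mu>" and \<mu>: "0 \<le> \<mu>"
    and bXY: "\<And>v. snorm (X v + Y v) \<le> \<mu> * snorm v"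
    and u: "snorm u = 1" and near: "\<mu> - d \<le> Re (ip (X u + Y u) u)"
  shows "(\<mu> - a) * (\<mu> - b) \<le> snorm (X (Y u)) + \<mu> * sqrt (2 * \<mu> * d)"
proof -
  define e where "e = (X u + Y u) - scaleR \<mu> u"
  have uu: "Re (ip u u) = 1" using u snorm_power2[of u] by simp
  have "(snorm e)\<^sup>2 = (snorm (X u + Y u))\<^sup>2 - 2 * \<mu> * Re (ip (X u + Y u) u) + \<mu>\<^sup>2"
    unfolding snorm_power2 e_def Re_self_diff by (simp add: scaleR_left scaleR_right uu power2_eq_square)
  also have "\<dots> \<le> \<mu>\<^sup>2 - 2 * \<mu> * (\<mu> - d) + \<mu>\<^sup>2"
  proof -
    have "snorm (X u + Y u) \<le> \<mu>" using bXY[of u] u by simp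
    then have "(snorm (X u + Y u))\<^sup>2 \<le> \<mu>\<^sup>2" by (rule power_mono) simp
    moreover have "2 * \<mu> * (\<mu> - d) \<le> 2 * \<mu> * Re (ip (X u + Y u) u)"
      using near \<mu> by (simp add: mult_left_mono)
    ultimately show ?thesis by linarith
  qed
  also have "\<dots> = 2 * \<mu> * d" by (simp add: algebra_simps power2_eq_square)
  finally have e_small: "snorm e \<le> sqrt (2 * \<mu> * d)" by (rule real_le_rsqrt)
  define v where "v = scaleR \<mu> u - Y u"
  define w where "w = scaleR \<mu> v - X v"
  \<comment> \<open>\<open>w = (\<mu> - X)(\<mu> - Y) u = X Y u - \<mu> e\<close>, where \<open>e\<close> is small because
    \<open>\<mu>\<close> is almost attained at u\<close>
  have w: "w = X (Y u) - scaleR \<mu> e"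
    by (simp add: w_def v_def e_def clinear_diff[OF X] clinear_scaleR[OF X] algebra_simps)
  have "(\<mu> - a) * (\<mu> - b) = (\<mu> - a) * ((\<mu> - b) * snorm u)" using u by simp
  also have "\<dots> \<le> (\<mu> - a) * snorm v"
    unfolding v_def using snorm_shift_lower_bound[OF bY b, of u] a by (simp add: mult_left_mono)
  also have "\<dots> \<le> snorm w" unfolding w_def by (rule snorm_shift_lower_bound[OF bX a])
  also have "\<dots> \<le> snorm (X (Y u)) + \<mu> * snorm e"
    using snorm_diff_le[of "X (Y u)" "scaleR \<mu> e"] \<mu> by (simp add: w snorm_scaleR)
  also have "\<dots> \<le> snorm (X (Y u)) + \<mu> * sqrt (2 * \<mu> * d)"
    using e_small \<mu> by (simp add: mult_left_mono)
  finally show ?thesis .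
qed

lemma shifted_product_bound_cmod:
  assumes X: "clinear X" and Y: "clinear Y" and sX: "hermitian X" and sY: "hermitian Y"
    and bX: "\<And>v. cmod (ip (X v) v) \<le> a * (snorm v)\<^sup>2"
    and bY: "\<And>v. cmod (ip (Y v) v) \<le> b * (snorm v)\<^sup>2"
    and a: "a \<le> \<mu>" and b: "b \<le> \<mu>" and \<mu>: "0 \<le> \<mu>"
    and bXY: "\<And>v. snorm (X v + Y v) \<le> \<mu> * snorm v"
    and u: "snorm u = 1" and near: "\<mu> - d \<le> cmod (ip (X u + Y u) u)"
  shows "(\<mu> - a) * (\<mu> - b) \<le> snorm (X (Y u)) + \<mu> * sqrt (2 * \<mu> * d)"
proof -
  have "Im (ip (X u + Y u) u) = 0"
    using hermitian_Im_self[OF hermitian_add[OF sX sY]] by simp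
  then have near_Re: "\<mu> - d \<le> \<bar>Re (ip (X u + Y u) u)\<bar>" using near by (simp add: cmod_def)
  show ?thesis
  proof (cases "0 \<le> Re (ip (X u + Y u) u)")
    case True
    show ?thesis by (rule shifted_product_bound[OF X Y bX bY a b \<mu> bXY u]) (use near_Re True in simp)
  next
    case False
    \<comment> \<open>replace X, Y by -X, -Y, which leaves X Y unchanged\<close>
    have "(\<mu> - a) * (\<mu> - b) \<le> snorm (- X (- Y u)) + \<mu> * sqrt (2 * \<mu> * d)"
    proof (rule shifted_product_bound[OF clinear_compose_neg[OF X] clinear_compose_neg[OF Y] _ _ a b \<mu> _ u])
      show "cmod (ip (- X v) v) \<le> a * (snorm v)\<^sup>2" for v using bX[of v] by (simp add: minus_left)
      show "cmod (ip (- Y v) v) \<le> b * (snorm v)\<^sup>2" for v using bY[of v] by (simp add: minus_left)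
      show "snorm (- X v + - Y v) \<le> \<mu> * snorm v" for v
        using bXY[of v] snorm_minus[of "X v + Y v"] by simp
      show "\<mu> - d \<le> Re (ip (- X u + - Y u) u)"
        using near_Re False by (simp add: minus_left add_left diff_left)
    qed
    then show ?thesis by (simp add: clinear_neg[OF X] snorm_minus)
  qed
qed

theorem cmod_add_le_upper_root:
  assumes X: "clinear X" and Y: "clinear Y" and sX: "hermitian X" and sY: "hermitian Y"
    and bX: "\<And>v. cmod (ip (X v) v) \<le> a * (snorm v)\<^sup>2"
    and bY: "\<And>v. cmod (ip (Y v) v) \<le> b * (snorm v)\<^sup>2"
    and bXY: "\<And>v. snorm (X (Y v)) \<le> m * snorm v"
    and x: "snorm x = 1"
  shows "cmod (ip (X x + Y x) x) \<le> upper_root a b m"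
proof (rule ccontr)
  assume "\<not> ?thesis"
  then have above: "upper_root a b m < cmod (ip (X x + Y x) x)" by simp
  define Z where "Z = (\<lambda>u. X u + Y u)"
  define \<mu> where "\<mu> = numrad Z"
  have Z: "clinear Z" "hermitian Z"
    unfolding Z_def by (rule clinear_compose_add[OF X Y], rule hermitian_add[OF sX sY])
  have "snorm (X (Y x)) \<le> m" using bXY[of x] x by simp
  then have m: "0 \<le> m" using order_trans[OF snorm_nonneg] by blast
  have bZ: "cmod (ip (Z u) u) \<le> a + b" if "snorm u = 1" for u
    using bX[of u] bY[of u] that norm_triangle_ineq[of "ip (X u) u" "ip (Y u) u"]
    by (simp add: Z_def add_left)
  have \<mu>: "0 \<le> \<mu>" unfolding \<mu>_def by (rule numrad_nonneg[OF x bZ])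
  have "cmod (ip (Z x) x) \<le> \<mu>" unfolding \<mu>_def by (rule cmod_le_numrad[OF x bZ])
  then have \<mu>_above: "upper_root a b m < \<mu>" using above by (simp add: Z_def)
  have a: "a \<le> \<mu>" and b: "b \<le> \<mu>"
    using upper_root_ge[OF m, where a = a and b = b] \<mu>_above by linarith+
  have "m = (upper_root a b m - a) * (upper_root a b m - b)" by (rule upper_root_eq[OF m, symmetric])
  also have "\<dots> < (\<mu> - a) * (\<mu> - b)"
    using upper_root_ge[OF m, where a = a and b = b] \<mu>_above by (intro mult_strict_mono) auto
  finally have "0 < (\<mu> - a) * (\<mu> - b) - m" by simp
  then obtain d where d: "0 < d" and small: "\<mu> * sqrt (2 * \<mu> * d) < (\<mu> - a) * (\<mu> - b) - m"
    using small_sqrt_term[OF \<mu>] by blast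
  obtain u where u: "snorm u = 1" and near: "\<mu> - d < cmod (ip (Z u) u)"
    using numrad_approx[OF x bZ d] unfolding \<mu>_def by blast
  have "snorm (Z v) \<le> \<mu> * snorm v" for v
    unfolding \<mu>_def by (rule hermitian_snorm_le_numrad[OF Z x bZ])
  then have "(\<mu> - a) * (\<mu> - b) \<le> snorm (X (Y u)) + \<mu> * sqrt (2 * \<mu> * d)"
    using near unfolding Z_def
    by (intro shifted_product_bound_cmod[OF X Y sX sY bX bY a b \<mu> _ u]) auto
  also have "\<dots> \<le> m + \<mu> * sqrt (2 * \<mu> * d)" using bXY[of u] u by simp
  finally show False using small by linarith
qed

end

interpretation cinner: semi_inner_product "cinner :: 'a::cinner_space \<Rightarrow> 'a \<Rightarrow> complex"
  by unfold_locales
    (simp_all add: cinner_add_left cinner_cscale_left cinner_self_ge_zero flip: cinner_commute)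

lemma cinner_snorm: "cinner.snorm x = norm x"
  by (simp add: cinner.snorm_def norm_eq_sqrt_cinner)

lemma cinner_ext: "(\<And>x. cinner x a = cinner x b) \<Longrightarrow> a = (b::'a::cinner_space)"
  using cinner_self_eq_zero[of "a - b"] by (simp add: cinner.diff_right)

lemma bounded_opE:
  assumes "bounded_op T"
  obtains K where "0 \<le> K" "\<And>x. norm (T x) \<le> K * norm x"
proof -
  from assms obtain K where K: "\<And>x. norm (T x) \<le> K * norm x"
    unfolding bounded_op_def by blast
  have "norm (T x) \<le> max K 0 * norm x" for x
    using K[of x] by (metis max.cobounded1 mult_right_mono norm_ge_zero order_trans)
  then show ?thesis by (intro that[of "max K 0"]) auto
qed

lemma bounded_op_bounded_linear:
  assumes "bounded_op T"
  shows "bounded_linear T"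
proof -
  obtain K where "clinear T" "\<And>x. norm (T x) \<le> K * norm x"
    using assms unfolding bounded_op_def by blast
  then show ?thesis
    by (intro bounded_linear_intro[of _ K]) (simp_all add: clinear_add clinear_scaleR mult.commute)
qed

lemma bounded_op_compose_cscale:
  assumes "bounded_op T"
  shows "bounded_op (\<lambda>x. cscale c (T x))"
proof -
  obtain K where T: "clinear T" and K: "\<And>x. norm (T x) \<le> K * norm x"
    using assms unfolding bounded_op_def by blast
  have "norm (cscale c (T x)) \<le> (cmod c * K) * norm x" for x
    using K[of x] by (simp add: cinner.snorm_cscale flip: cinner_snorm)
      (simp add: cinner_snorm mult.assoc mult_left_mono)
  then show ?thesis using clinear_compose_cscale[OF T] by (auto simp: bounded_op_def)
qed

definition csubspace :: "'a::cvector set \<Rightarrow> bool" where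
  "csubspace M \<longleftrightarrow> 0 \<in> M \<and> (\<forall>x\<in>M. \<forall>y\<in>M. x + y \<in> M) \<and> (\<forall>c. \<forall>x\<in>M. cscale c x \<in> M)"

lemma csubspace_kernel: "clinear f \<Longrightarrow> csubspace {x. f x = 0}"
  by (simp add: csubspace_def clinear_0 clinear_add clinear_cscale)

lemma Cauchy_if_norm_diff_le:
  fixes X :: "nat \<Rightarrow> 'a::real_normed_vector"
  assumes bound: "\<And>i j. (norm (X i - X j))\<^sup>2 \<le> e i + e j" and e: "e \<longlonglongrightarrow> 0"
  shows "Cauchy X"
proof (rule CauchyI)
  fix r :: real assume r: "0 < r"
  then obtain N where N: "\<And>n. N \<le> n \<Longrightarrow> \<bar>e n\<bar> < r\<^sup>2 / 2"
    using e unfolding LIMSEQ_iff by (metis half_gt_zero real_norm_def diff_zero zero_less_power)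
  have "norm (X i - X j) < r" if "N \<le> i" "N \<le> j" for i j
  proof -
    have "(norm (X i - X j))\<^sup>2 < r\<^sup>2" using bound[of i j] N[OF that(1)] N[OF that(2)] by linarith
    then show ?thesis using r by (simp add: power_less_imp_less_base)
  qed
  then show "\<exists>N. \<forall>i\<ge>N. \<forall>j\<ge>N. norm (X i - X j) < r" by blast
qed

lemma nearest_point_exists:
  fixes M :: "'a::chilbert set"
  assumes closed: "closed M" and nonempty: "M \<noteq> {}"
    and midpoint: "\<And>a b. a \<in> M \<Longrightarrow> b \<in> M \<Longrightarrow> scaleR (1/2) (a + b) \<in> M"
  obtains m where "m \<in> M" "\<And>v. v \<in> M \<Longrightarrow> norm (y - m) \<le> norm (y - v)"
proof -
  define D where "D = Inf {(norm (y - v))\<^sup>2 | v. v \<in> M}"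
  have D_le: "D \<le> (norm (y - v))\<^sup>2" if "v \<in> M" for v
    unfolding D_def by (rule cInf_lower) (use that in \<open>auto intro!: bdd_belowI[where m = 0]\<close>)
  have "\<exists>v. v \<in> M \<and> (norm (y - v))\<^sup>2 < D + inverse (real (Suc n))" for n
  proof -
    have "D < D + inverse (real (Suc n))" by simp
    then show ?thesis unfolding D_def
      by (subst (asm) cInf_less_iff) (use nonempty in \<open>auto intro!: bdd_belowI[where m = 0]\<close>)
  qed
  then obtain z where z: "\<And>n. z n \<in> M" and near: "\<And>n. (norm (y - z n))\<^sup>2 < D + inverse (real (Suc n))"
    by metis
  \<comment> \<open>parallelogram law at the midpoint of \<open>z i\<close> and \<open>z j\<close>\<close>
  have "(norm (z i - z j))\<^sup>2 \<le> 2 * inverse (real (Suc i)) + 2 * inverse (real (Suc j))" for i j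
  proof -
    have "(norm ((y - z i) + (y - z j)))\<^sup>2 + (norm ((y - z i) - (y - z j)))\<^sup>2
        = 2 * (norm (y - z i))\<^sup>2 + 2 * (norm (y - z j))\<^sup>2"
      using cinner.parallelogram_law[of "y - z i" "y - z j"] by (simp add: cinner_snorm)
    moreover have "(y - z i) + (y - z j) = scaleR 2 (y - scaleR (1/2) (z i + z j))"
      by (simp add: algebra_simps scaleR_2)
    then have "(norm ((y - z i) + (y - z j)))\<^sup>2 = 4 * (norm (y - scaleR (1/2) (z i + z j)))\<^sup>2"
      by (simp add: power_mult_distrib)
    moreover have "D \<le> (norm (y - scaleR (1/2) (z i + z j)))\<^sup>2" using D_le midpoint z by blast
    ultimately show ?thesis using near[of i] near[of j] by (simp add: norm_minus_commute)
  qed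
  moreover have "(\<lambda>n. 2 * inverse (real (Suc n))) \<longlonglongrightarrow> 0"
    using tendsto_mult_right_zero[OF LIMSEQ_inverse_real_of_nat] by simp
  ultimately have "Cauchy z" by (rule Cauchy_if_norm_diff_le)
  then obtain m where lim: "z \<longlonglongrightarrow> m" using Cauchy_convergent convergent_def by blast
  show ?thesis
  proof
    show "m \<in> M" by (rule closed_sequentially[OF closed z lim])
    fix v assume v: "v \<in> M"
    have "(norm (y - m))\<^sup>2 \<le> (norm (y - v))\<^sup>2"
    proof (rule LIMSEQ_le)
      show "(\<lambda>n. (norm (y - z n))\<^sup>2) \<longlonglongrightarrow> (norm (y - m))\<^sup>2"
        by (intro tendsto_intros lim)
      show "(\<lambda>n. (norm (y - v))\<^sup>2 + inverse (real (Suc n))) \<longlonglongrightarrow> (norm (y - v))\<^sup>2"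
        using tendsto_add[OF tendsto_const LIMSEQ_inverse_real_of_nat] by simp
      show "\<exists>N. \<forall>n\<ge>N. (norm (y - z n))\<^sup>2 \<le> (norm (y - v))\<^sup>2 + inverse (real (Suc n))"
        using near D_le[OF v] by (meson less_le_not_le add_right_mono order_trans)
    qed
    then show "norm (y - m) \<le> norm (y - v)" by (rule power2_le_imp_le) simp
  qed
qed

lemma nearest_point_orthogonal:
  fixes M :: "'a::chilbert set"
  assumes M: "csubspace M" and m: "m \<in> M" and nearest: "\<And>v. v \<in> M \<Longrightarrow> norm (y - m) \<le> norm (y - v)"
    and v: "v \<in> M"
  shows "cinner (y - m) v = 0"
proof (rule ccontr)
  assume nz: "cinner (y - m) v \<noteq> 0"
  define q where "q = cinner (y - m) v"
  define V where "V = (norm v)\<^sup>2"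
  define r where "r = 1 / (V + 1)"
  define t where "t = complex_of_real r * q"
  have V: "0 \<le> V" by (simp add: V_def)
  have r: "0 < r" using V by (simp add: r_def)
  have "m + cscale t v \<in> M" using M m v by (simp add: csubspace_def)
  then have "norm (y - m) \<le> norm (y - m - cscale t v)" using nearest by (simp add: diff_diff_eq)
  then have "(norm (y - m))\<^sup>2 \<le> (norm (y - m - cscale t v))\<^sup>2" by (rule power_mono) simp
  also have "\<dots> = (norm (y - m))\<^sup>2 - 2 * Re (cnj t * q) + (cmod t)\<^sup>2 * V"
    using cinner.Re_self_diff_cscale[of "y - m" t v]
    by (simp add: cinner.snorm_power2[symmetric] cinner_snorm q_def V_def)
  also have "cnj t * q = complex_of_real (r * (cmod q)\<^sup>2)"
    unfolding t_def of_real_mult complex_norm_square by (simp add: mult.commute)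
  also have "(cmod t)\<^sup>2 = r\<^sup>2 * (cmod q)\<^sup>2" using r by (simp add: t_def norm_mult power_mult_distrib)
  finally have "2 * r * (cmod q)\<^sup>2 \<le> r\<^sup>2 * (cmod q)\<^sup>2 * V" by simp
  then have "2 * (cmod q)\<^sup>2 \<le> (r * V) * (cmod q)\<^sup>2" using r
    by (simp add: power2_eq_square mult_ac)
  moreover have "r * V < 1" using V by (simp add: r_def)
  moreover have "0 < (cmod q)\<^sup>2" using nz by (simp add: q_def)
  ultimately show False by (smt (verit) mult_less_cancel_right2)
qed

theorem orthogonal_projection_exists:
  fixes M :: "'a::chilbert set"
  assumes "closed M" and M: "csubspace M"
  obtains m where "m \<in> M" "\<And>v. v \<in> M \<Longrightarrow> cinner (y - m) v = 0"
proof -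
  have "scaleR (1/2) (a + b) \<in> M" if "a \<in> M" "b \<in> M" for a b
    using M that by (simp add: csubspace_def scaleR_cscale)
  then obtain m where "m \<in> M" "\<And>v. v \<in> M \<Longrightarrow> norm (y - m) \<le> norm (y - v)"
    using nearest_point_exists[OF assms(1)] M unfolding csubspace_def by blast
  then show ?thesis using that nearest_point_orthogonal[OF M] by blast
qed

theorem riesz_representation:
  fixes f :: "'a::chilbert \<Rightarrow> complex"
  assumes add: "\<And>x y. f (x + y) = f x + f y" and scale: "\<And>c x. f (cscale c x) = c * f x"
    and bounded: "\<And>x. cmod (f x) \<le> K * norm x"
  obtains w where "\<And>x. f x = cinner x w"
proof (cases "\<forall>x. f x = 0")
  case True
  then show ?thesis using that[of 0] by simp
next
  case False
  then obtain x0 where x0: "f x0 \<noteq> 0" by blast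
  have f0: "f 0 = 0" using add[of 0 0] by simp
  have diff: "f (x - y) = f x - f y" for x y using add[of "x - y" y] by (simp add: eq_diff_eq)
  have f: "bounded_linear f"
    by (rule bounded_linear_intro[of _ K])
      (use add scale bounded in \<open>simp_all add: scaleR_cscale scaleR_conv_of_real mult.commute\<close>)
  have "closed {x. f x = 0}"
    by (rule closed_Collect_eq) (simp_all add: linear_continuous_on[OF f])
  moreover have "csubspace {x. f x = 0}" by (simp add: csubspace_def f0 add scale)
  ultimately obtain m where m: "f m = 0" and orth: "\<And>v. f v = 0 \<Longrightarrow> cinner (x0 - m) v = 0"
    by (rule orthogonal_projection_exists[of "{x. f x = 0}" x0]) auto
  define u where "u = x0 - m"
  have fu: "f u = f x0" using m by (simp add: u_def diff)
  have "u \<noteq> 0" using fu x0 f0 by auto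
  then have k: "cinner u u \<noteq> 0" by (simp add: cinner_self_eq_zero)
  have "f x = cinner x (cscale (cnj (f u / cinner u u)) u)" for x
  proof -
    define z where "z = x - cscale (f x / f u) u"
    have "f z = 0" using fu x0 by (simp add: z_def diff scale)
    then have "cinner u z = 0" using orth u_def by simp
    then have "cinner z u = 0" using cinner_commute[of u z] by simp
    then have xu: "cinner x u = (f x / f u) * cinner u u"
      by (simp add: z_def cinner.diff_left cinner_cscale_left)
    have "cinner x (cscale (cnj (f u / cinner u u)) u) = (f u / cinner u u) * cinner x u"
      by (simp add: cinner.cscale_right)
    also have "\<dots> = f x" using k fu x0 by (simp add: xu)
    finally show ?thesis by simp
  qed
  then show ?thesis by (rule that)
qed

lemma adj_cinner:
  fixes T :: "'a::chilbert \<Rightarrow> 'a"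
  assumes "bounded_op T"
  shows "cinner (T x) y = cinner x (adj T y)"
proof -
  obtain K where T: "clinear T" and K: "\<And>x. norm (T x) \<le> K * norm x"
    using assms unfolding bounded_op_def by blast
  have "\<exists>w. \<forall>x. cinner (T x) y = cinner x w" for y
  proof (rule riesz_representation[of "\<lambda>x. cinner (T x) y" "K * norm y"])
    show "cinner (T (a + b)) y = cinner (T a) y + cinner (T b) y" for a b
      by (simp add: clinear_add[OF T] cinner_add_left)
    show "cinner (T (cscale c a)) y = c * cinner (T a) y" for c a
      by (simp add: clinear_cscale[OF T] cinner_cscale_left)
    show "cmod (cinner (T a) y) \<le> K * norm y * norm a" for a
    proof -
      have "cmod (cinner (T a) y) \<le> norm (T a) * norm y"
        using cinner.Cauchy_Schwarz[of "T a" y] by (simp add: cinner_snorm)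
      also have "\<dots> \<le> K * norm a * norm y" using K[of a] by (simp add: mult_right_mono)
      finally show ?thesis by (simp add: mult_ac)
    qed
  qed blast
  then obtain S where S: "\<And>x y. cinner (T x) y = cinner x (S y)" by metis
  have unique: "S' = S" if S': "\<forall>x y. cinner (T x) y = cinner x (S' y)" for S'
  proof
    show "S' y = S y" for y by (rule cinner_ext) (simp add: S' flip: S)
  qed
  have "\<forall>x y. cinner (T x) y = cinner x (adj T y)"
    unfolding adj_def by (rule theI[of _ S]) (use S unique in auto)
  then show ?thesis by blast
qed

locale positive_operator =
  fixes A :: "'a::chilbert \<Rightarrow> 'a"
  assumes positive: "positive_op A"
begin

lemma clinear_A: "clinear A"
  using positive by (simp add: positive_op_def bounded_op_def)

lemma A_selfadjoint: "cinner (A x) y = cinner x (A y)"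
proof -
  have Im: "Im (cinner (A z) z) = 0" for z using positive by (simp add: positive_op_def)
  define s where "s = cinner (A x) y"
  define t where "t = cinner (A y) x"
  \<comment> \<open>polarization: \<open>\<langle>A z, z\<rangle>\<close> is real for \<open>z = x + y\<close> and \<open>z = x + \<i> y\<close>\<close>
  have "Im (s + t) = 0"
    using Im[of "x + y"] Im[of x] Im[of y]
    by (simp add: clinear_add[OF clinear_A] cinner_add_left cinner.add_right s_def t_def)
  moreover have "Im (- \<i> * s + \<i> * t) = 0"
    using Im[of "x + cscale \<i> y"] Im[of x] Im[of y]
    by (simp add: clinear_add[OF clinear_A] clinear_cscale[OF clinear_A] cinner_add_left
        cinner.add_right cinner_cscale_left cinner.cscale_right s_def t_def)
  ultimately have "t = cnj s" by (simp add: complex_eq_iff)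
  then show ?thesis using cinner_commute[of "A y" x] by (simp add: s_def t_def)
qed

end

sublocale positive_operator \<subseteq> semi_inner_product "innerA A"
proof
  show "innerA A (x + y) z = innerA A x z + innerA A y z" for x y z
    by (simp add: innerA_def clinear_add[OF clinear_A] cinner_add_left)
  show "innerA A (cscale c x) y = c * innerA A x y" for c x y
    by (simp add: innerA_def clinear_cscale[OF clinear_A] cinner_cscale_left)
  show "innerA A y x = cnj (innerA A x y)" for x y
    unfolding innerA_def A_selfadjoint[of y x] by (rule cinner_commute)
  show "0 \<le> Re (innerA A x x)" for x
    using positive by (simp add: innerA_def positive_op_def)
qed

context positive_operator
begin

lemma snorm_eq_normA: "snorm = normA A"
  by (simp add: fun_eq_iff snorm_def normA_def innerA_def)

lemma numrad_eq_omegaA: "numrad = omegaA A"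
  by (simp add: fun_eq_iff numrad_def omegaA_def snorm_eq_normA)

lemma opnorm_eq_opnormA: "opnorm = opnormA A"
  by (simp add: fun_eq_iff opnorm_def opnormA_def snorm_eq_normA)

lemma exists_unit:
  assumes "A \<noteq> (\<lambda>_. 0)"
  obtains u where "snorm u = 1"
proof -
  obtain y where y: "A y \<noteq> 0" using assms by auto
  have "snorm y \<noteq> 0"
  proof
    assume "snorm y = 0"
    then have "cmod (innerA A y (A y)) \<le> 0" using Cauchy_Schwarz[of y "A y"] by simp
    then show False using y by (simp add: innerA_def cinner_self_eq_zero)
  qed
  then have "snorm (scaleR (1 / snorm y) y) = 1"
    using snorm_nonneg[of y] by (simp add: snorm_scaleR)
  then show ?thesis by (rule that)
qed

lemma kernel_orth_unique:
  assumes "A z1 = A z2" and "\<And>w. A w = 0 \<Longrightarrow> cinner z1 w = 0" and "\<And>w. A w = 0 \<Longrightarrow> cinner z2 w = 0"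
  shows "z1 = z2"
proof -
  have "A (z1 - z2) = 0" using assms(1) by (simp add: clinear_diff[OF clinear_A])
  then have "cinner (z1 - z2) (z1 - z2) = 0" using assms(2,3) by (simp add: cinner.diff_left)
  then show ?thesis by (simp add: cinner_self_eq_zero)
qed

lemma kernel_orth_exists: "\<exists>z. A z = A y \<and> (\<forall>w. A w = 0 \<longrightarrow> cinner z w = 0)"
proof -
  have "closed {w. A w = 0}"
    using positive bounded_op_bounded_linear[of A] unfolding positive_op_def
    by (intro closed_Collect_eq) (simp_all add: linear_continuous_on)
  then obtain m where "A m = 0" and "\<And>w. A w = 0 \<Longrightarrow> cinner (y - m) w = 0"
    by (rule orthogonal_projection_exists[OF _ csubspace_kernel[OF clinear_A]]) auto
  then show ?thesis by (intro exI[of _ "y - m"]) (simp add: clinear_diff[OF clinear_A])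
qed

lemma sharpA_spec:
  assumes T: "bounded_op T" and S: "\<And>x y. innerA A (T x) y = innerA A x (S y)"
  shows "A (sharpA A T x) = A (S x)" and "\<And>w. A w = 0 \<Longrightarrow> cinner (sharpA A T x) w = 0"
proof -
  have adj: "adj T (A x) = A (S x)"
  proof (rule cinner_ext)
    fix u
    have "cinner u (adj T (A x)) = cinner (A (T u)) x"
      by (simp add: adj_cinner[OF T] A_selfadjoint)
    also have "\<dots> = cinner u (A (S x))" using S[of u x] by (simp add: innerA_def A_selfadjoint)
    finally show "cinner u (adj T (A x)) = cinner u (A (S x))" .
  qed
  obtain z where z: "A z = A (S x)" "\<forall>w. A w = 0 \<longrightarrow> cinner z w = 0"
    using kernel_orth_exists by blast
  have "sharpA A T x = z" unfolding sharpA_def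
    by (rule the_equality) (use z adj kernel_orth_unique in auto)
  then show "A (sharpA A T x) = A (S x)" "\<And>w. A w = 0 \<Longrightarrow> cinner (sharpA A T x) w = 0"
    using z by auto
qed

lemma innerA_sharpA:
  assumes "inBA A T"
  shows "innerA A (sharpA A T x) y = innerA A x (T y)"
proof -
  obtain S where T: "bounded_op T" and S: "\<And>x y. innerA A (T x) y = innerA A x (S y)"
    using assms unfolding inBA_def by blast
  have "innerA A (sharpA A T x) y = innerA A (S x) y"
    by (simp add: innerA_def sharpA_spec(1)[OF T S])
  also have "\<dots> = innerA A x (T y)" by (metis S conj_sym)
  finally show ?thesis .
qed

lemma clinear_sharpA:
  assumes "inBA A T"
  shows "clinear (sharpA A T)"
proof -
  obtain S where T: "bounded_op T" and "bounded_op S"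
    and S: "\<And>x y. innerA A (T x) y = innerA A x (S y)"
    using assms unfolding inBA_def by blast
  then have "clinear S" by (simp add: bounded_op_def)
  note spec = sharpA_spec[OF T S] and A = clinear_A
  show ?thesis unfolding clinear_def
  proof (intro conjI allI)
    show "sharpA A T (x + y) = sharpA A T x + sharpA A T y" for x y
      by (rule kernel_orth_unique)
        (simp_all add: spec cinner_add_left clinear_add[OF A] clinear_add[OF \<open>clinear S\<close>])
    show "sharpA A T (cscale c x) = cscale c (sharpA A T x)" for c x
      by (rule kernel_orth_unique)
        (simp_all add: spec cinner_cscale_left clinear_cscale[OF A] clinear_cscale[OF \<open>clinear S\<close>])
  qed
qed

lemma innerA_ReA:
  assumes "inBA A T"
  shows "innerA A (ReA A T x) y = (innerA A (T x) y + innerA A x (T y)) / 2"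
  by (simp add: ReA_def cscale_left add_left innerA_sharpA[OF assms])

lemma clinear_ReA: "inBA A T \<Longrightarrow> clinear (ReA A T)"
  using clinear_sharpA[of T] unfolding inBA_def bounded_op_def ReA_def
  by (intro clinear_compose_cscale clinear_compose_add) auto

lemma inBA_compose_cscale:
  assumes "inBA A T"
  shows "inBA A (\<lambda>x. cscale c (T x))"
proof -
  obtain S where "bounded_op T" "bounded_op S" and S: "\<And>x y. innerA A (T x) y = innerA A x (S y)"
    using assms unfolding inBA_def by blast
  then show ?thesis unfolding inBA_def
    by (intro conjI exI[of _ "\<lambda>x. cscale (cnj c) (S x)"] bounded_op_compose_cscale)
      (simp_all add: cscale_left cscale_right S)
qed

lemma inBA_snorm_bound:
  assumes "inBA A T"
  obtains K where "0 \<le> K" "\<And>x. snorm (T x) \<le> K * snorm x"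
proof -
  obtain S where T: "bounded_op T" and S: "bounded_op S"
    and adjoint: "\<And>x y. innerA A (T x) y = innerA A x (S y)"
    using assms unfolding inBA_def by blast
  obtain KT where KT: "0 \<le> KT" "\<And>x. norm (T x) \<le> KT * norm x" using bounded_opE[OF T] by metis
  obtain KS where KS: "0 \<le> KS" "\<And>x. norm (S x) \<le> KS * norm x" using bounded_opE[OF S] by metis
  have "bounded_op A" using positive by (simp add: positive_op_def)
  then obtain KA where KA: "0 \<le> KA" "\<And>x. norm (A x) \<le> KA * norm x" using bounded_opE by metis
  define L where "L = KS * KT"
  have L: "0 \<le> L" using KS KT by (simp add: L_def)
  have dominated: "snorm y \<le> sqrt KA * norm y" for y
  proof -
    have "(snorm y)\<^sup>2 \<le> cmod (cinner (A y) y)"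
      using complex_Re_le_cmod by (simp add: snorm_power2 innerA_def)
    also have "\<dots> \<le> norm (A y) * norm y"
      using cinner.Cauchy_Schwarz[of "A y" y] by (simp add: cinner_snorm)
    also have "\<dots> \<le> KA * norm y * norm y" by (rule mult_right_mono[OF KA(2) norm_ge_zero])
    also have "\<dots> = (sqrt KA * norm y)\<^sup>2" using KA(1) by (simp add: power_mult_distrib power2_eq_square)
    finally show ?thesis by (rule power2_le_imp_le) (simp add: KA)
  qed
  \<comment> \<open>\<open>S T\<close> is A-hermitian and norm-bounded, so it is also bounded for the seminorm\<close>
  have herm: "hermitian (\<lambda>x. S (T x))"
  proof (unfold hermitian_def, intro allI)
    fix u v
    have "innerA A (S (T u)) v = cnj (innerA A v (S (T u)))" by (rule conj_sym)
    also have "\<dots> = cnj (innerA A (T v) (T u))" by (simp add: adjoint)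
    also have "\<dots> = innerA A (T u) (T v)" by (rule conj_sym[symmetric])
    also have "\<dots> = innerA A u (S (T v))" by (rule adjoint)
    finally show "innerA A (S (T u)) v = innerA A u (S (T v))" .
  qed
  have bounded: "norm (S (T y)) \<le> L * norm y" for y
    using KS(2)[of "T y"] mult_left_mono[OF KT(2)[of y] KS(1)] by (simp add: L_def mult.assoc)
  have ST: "snorm (S (T x)) \<le> L * snorm x" for x
    by (rule hermitian_snorm_bound[where N = norm, OF herm real_sqrt_ge_zero[OF KA(1)] dominated L bounded])
  have "snorm (T x) \<le> sqrt L * snorm x" for x
  proof -
    have "(snorm (T x))\<^sup>2 = Re (innerA A x (S (T x)))" by (simp add: snorm_power2 adjoint)
    also have "\<dots> \<le> snorm x * snorm (S (T x))" by (rule Re_le_snorm_mult)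
    also have "\<dots> \<le> snorm x * (L * snorm x)" by (rule mult_left_mono[OF ST snorm_nonneg])
    also have "\<dots> = (sqrt L * snorm x)\<^sup>2" using L by (simp add: power_mult_distrib power2_eq_square)
    finally show ?thesis by (rule power2_le_imp_le) (simp add: L)
  qed
  then show ?thesis using that[of "sqrt L"] L by simp
qed

lemma omegaA_bound:
  assumes T: "inBA A T" and u0: "snorm u0 = 1"
  shows "0 \<le> omegaA A T" and "cmod (innerA A (T u) u) \<le> omegaA A T * (snorm u)\<^sup>2"
proof -
  obtain K where K: "\<And>x. snorm (T x) \<le> K * snorm x" using inBA_snorm_bound[OF T] by blast
  have unit: "cmod (innerA A (T x) x) \<le> K" if "snorm x = 1" for x
    using Cauchy_Schwarz[of "T x" x] K[of x] that by simp
  show "0 \<le> omegaA A T" using numrad_nonneg[OF u0 unit] by (simp add: numrad_eq_omegaA)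
  have "clinear T" using T by (simp add: inBA_def bounded_op_def)
  from cmod_le_of_unit_bound[OF this cmod_le_numrad[OF _ unit]]
  show "cmod (innerA A (T u) u) \<le> omegaA A T * (snorm u)\<^sup>2" by (simp add: numrad_eq_omegaA)
qed

lemma ReA_rotation:
  fixes e :: complex
  assumes T: "inBA A T"
  defines "X \<equiv> ReA A (\<lambda>x. cscale e (T x))"
  shows "clinear X" and "hermitian X"
    and "innerA A (X v) v = complex_of_real (Re (e * innerA A (T v) v))"
proof -
  have eT: "inBA A (\<lambda>x. cscale e (T x))" by (rule inBA_compose_cscale[OF T])
  show "clinear X" unfolding X_def by (rule clinear_ReA[OF eT])
  have "innerA A (X u) v = (innerA A (cscale e (T u)) v + innerA A u (cscale e (T v))) / 2" for u v
    unfolding X_def by (rule innerA_ReA[OF eT])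
  from hermitian_part[OF this]
  show "hermitian X" and "innerA A (X v) v = complex_of_real (Re (e * innerA A (T v) v))"
    by (simp_all add: cscale_left)
qed

lemma ReA_rotation_bounds:
  fixes e :: complex
  assumes T: "inBA A T" and e: "cmod e = 1" and a: "0 \<le> a"
    and bound: "\<And>u. cmod (innerA A (T u) u) \<le> a * (snorm u)\<^sup>2"
  defines "X \<equiv> ReA A (\<lambda>x. cscale e (T x))"
  shows "cmod (innerA A (X v) v) \<le> a * (snorm v)\<^sup>2" and "snorm (X v) \<le> a * snorm v"
proof -
  have X_bound: "cmod (innerA A (X u) u) \<le> a * (snorm u)\<^sup>2" for u
  proof -
    have "cmod (innerA A (X u) u) = \<bar>Re (e * innerA A (T u) u)\<bar>"
      unfolding X_def ReA_rotation(3)[OF T] by (rule norm_of_real)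
    also have "\<dots> \<le> cmod (e * innerA A (T u) u)" by (rule abs_Re_le_cmod)
    also have "\<dots> = cmod (innerA A (T u) u)" by (simp add: norm_mult e)
    finally show ?thesis using bound[of u] by linarith
  qed
  then show "cmod (innerA A (X v) v) \<le> a * (snorm v)\<^sup>2" .
  show "snorm (X v) \<le> a * snorm v"
    using hermitian_snorm_le[OF ReA_rotation(1,2)[OF T] a] X_bound unfolding X_def by blast
qed

lemma rotated_products_bound:
  assumes T: "inBA A T" and S: "inBA A S" and u0: "snorm u0 = 1"
  defines "P \<equiv> \<lambda>\<theta>::real. ReA A (\<lambda>x. cscale (exp (\<i> * of_real \<theta>)) (T x)) \<circ>
                          ReA A (\<lambda>x. cscale (exp (\<i> * of_real \<theta>)) (S x))"
  shows "(SUP \<theta>. opnormA A (P \<theta>)) \<le> omegaA A T * omegaA A S"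
    and "snorm (P \<theta> v) \<le> (SUP \<theta>. opnormA A (P \<theta>)) * snorm v"
proof -
  note a = omegaA_bound[OF T u0] and b = omegaA_bound[OF S u0]
  have e: "cmod (exp (\<i> * complex_of_real \<theta>)) = 1" for \<theta> by simp
  have P: "clinear (P \<theta>)" for \<theta>
    unfolding P_def by (intro clinear_compose clinear_ReA inBA_compose_cscale T S)
  have P_bound: "snorm (P \<theta> v) \<le> (omegaA A T * omegaA A S) * snorm v" for \<theta> v
  proof -
    note X = ReA_rotation_bounds(2)[OF T e a] and Y = ReA_rotation_bounds(2)[OF S e b]
    have "snorm (P \<theta> v) \<le> omegaA A T * snorm (ReA A (\<lambda>x. cscale (exp (\<i> * of_real \<theta>)) (S x)) v)"
      unfolding P_def comp_apply by (rule X)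
    also have "\<dots> \<le> omegaA A T * (omegaA A S * snorm v)" by (rule mult_left_mono[OF Y a(1)])
    finally show ?thesis by (simp add: mult.assoc)
  qed
  have opnorm_bound: "opnormA A (P \<theta>) \<le> omegaA A T * omegaA A S" for \<theta>
    unfolding opnorm_eq_opnormA[symmetric] by (rule opnorm_le[OF u0]) (metis P_bound mult.right_neutral)
  then show "(SUP \<theta>. opnormA A (P \<theta>)) \<le> omegaA A T * omegaA A S" by (rule cSUP_least[OF UNIV_not_empty])
  have "opnormA A (P \<theta>) \<le> (SUP \<theta>. opnormA A (P \<theta>))"
    using opnorm_bound by (intro cSUP_upper bdd_aboveI2) auto
  moreover have "snorm (P \<theta> v) \<le> opnormA A (P \<theta>) * snorm v"
    using snorm_le_opnorm_mult[OF P u0 P_bound] by (simp add: opnorm_eq_opnormA)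
  ultimately show "snorm (P \<theta> v) \<le> (SUP \<theta>. opnormA A (P \<theta>)) * snorm v"
    by (meson mult_right_mono order_trans snorm_nonneg)
qed

lemma omegaA_add_le_upper_root:
  assumes T: "inBA A T" and S: "inBA A S" and u0: "snorm u0 = 1"
    and product: "\<And>\<theta> v. snorm (ReA A (\<lambda>x. cscale (exp (\<i> * of_real \<theta>)) (T x))
                      (ReA A (\<lambda>x. cscale (exp (\<i> * of_real \<theta>)) (S x)) v)) \<le> m * snorm v"
  shows "omegaA A (\<lambda>x. T x + S x) \<le> upper_root (omegaA A T) (omegaA A S) m"
proof -
  note a = omegaA_bound[OF T u0] and b = omegaA_bound[OF S u0]
  have "cmod (innerA A (T x + S x) x) \<le> upper_root (omegaA A T) (omegaA A S) m"
    if x: "snorm x = 1" for x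
  proof -
    define q where "q = innerA A (T x + S x) x"
    define \<theta> where "\<theta> = - Arg q"
    define e where "e = exp (\<i> * of_real \<theta>)"
    have e: "cmod e = 1" by (simp add: e_def)
    define X where "X = ReA A (\<lambda>x. cscale e (T x))"
    define Y where "Y = ReA A (\<lambda>x. cscale e (S x))"
    \<comment> \<open>the rotation by e makes \<open>\<langle>(T + S) x, x\<rangle>\<^sub>A\<close> real and nonnegative\<close>
    have "cmod q = Re (e * q)"
      using cis_minus_Arg_mult[of q] by (simp add: e_def \<theta>_def cis_conv_exp)
    also have "\<dots> = Re (innerA A (X x + Y x) x)"
      by (simp add: q_def X_def Y_def add_left ReA_rotation(3)[OF T] ReA_rotation(3)[OF S]
          distrib_left)
    also have "\<dots> \<le> cmod (innerA A (X x + Y x) x)" by (rule complex_Re_le_cmod)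
    also have "\<dots> \<le> upper_root (omegaA A T) (omegaA A S) m"
      unfolding X_def Y_def
    proof (rule cmod_add_le_upper_root[OF ReA_rotation(1)[OF T] ReA_rotation(1)[OF S]
          ReA_rotation(2)[OF T] ReA_rotation(2)[OF S] _ _ _ x])
      show "cmod (innerA A (ReA A (\<lambda>x. cscale e (T x)) v) v) \<le> omegaA A T * (snorm v)\<^sup>2" for v
        by (rule ReA_rotation_bounds(1)[OF T e a])
      show "cmod (innerA A (ReA A (\<lambda>x. cscale e (S x)) v) v) \<le> omegaA A S * (snorm v)\<^sup>2" for v
        by (rule ReA_rotation_bounds(1)[OF S e b])
      show "snorm (ReA A (\<lambda>x. cscale e (T x)) (ReA A (\<lambda>x. cscale e (S x)) v)) \<le> m * snorm v" for v
        unfolding e_def by (rule product)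
    qed
    finally show ?thesis by (simp add: q_def)
  qed
  then have "numrad (\<lambda>x. T x + S x) \<le> upper_root (omegaA A T) (omegaA A S) m"
    by (rule numrad_le[OF u0])
  then show ?thesis by (simp add: numrad_eq_omegaA)
qed

end

theorem theorem3p4:
  fixes A T S :: "'a::chilbert \<Rightarrow> 'a"
  assumes "positive_op A" and "A \<noteq> (\<lambda>_. 0)"
    and "inBA A T" and "inBA A S"
  shows "omegaA A (\<lambda>x. T x + S x)
           \<le> 1/2 * (omegaA A T + omegaA A S +
                sqrt ((omegaA A T - omegaA A S)\<^sup>2 +
                  4 * (SUP \<theta>::real. opnormA A
                        (ReA A (\<lambda>x. cscale (exp (\<i> * of_real \<theta>)) (T x)) \<circ>
                         ReA A (\<lambda>x. cscale (exp (\<i> * of_real \<theta>)) (S x))))))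
       \<and> 1/2 * (omegaA A T + omegaA A S +
                sqrt ((omegaA A T - omegaA A S)\<^sup>2 +
                  4 * (SUP \<theta>::real. opnormA A
                        (ReA A (\<lambda>x. cscale (exp (\<i> * of_real \<theta>)) (T x)) \<circ>
                         ReA A (\<lambda>x. cscale (exp (\<i> * of_real \<theta>)) (S x))))))
           \<le> omegaA A T + omegaA A S"
proof -
  interpret positive_operator A by unfold_locales (rule assms(1))
  obtain u0 where u0: "snorm u0 = 1" using exists_unit[OF assms(2)] .
  define M where "M = (SUP \<theta>::real. opnormA A
                        (ReA A (\<lambda>x. cscale (exp (\<i> * of_real \<theta>)) (T x)) \<circ>
                         ReA A (\<lambda>x. cscale (exp (\<i> * of_real \<theta>)) (S x))))"
  note products = rotated_products_bound[OF assms(3,4) u0, folded M_def, unfolded comp_apply]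
  have "omegaA A (\<lambda>x. T x + S x) \<le> upper_root (omegaA A T) (omegaA A S) M"
    by (rule omegaA_add_le_upper_root[OF assms(3,4) u0 products(2)])
  moreover have "upper_root (omegaA A T) (omegaA A S) M \<le> omegaA A T + omegaA A S"
    by (rule upper_root_le_add[OF omegaA_bound(1)[OF assms(3) u0] omegaA_bound(1)[OF assms(4) u0]
          products(1)])
  ultimately show ?thesis unfolding M_def upper_root_def by simp
qed

end
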